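(* Let $e_1<e_2<e_3<e_4$ be distinct reals, $h>0$, and consider on $M_h$ the functions $\eta_1=\sum_{i<j}\ell_{ij}^2\sum_{k\ne i,j}e_k$ and $\eta_2=\sum_{i<j}\ell_{ij}^2\prod_{k\ne i,j}e_k$. For $\alpha\neq0$ and $\beta\in\mathbb R$, let $(\eta_1',\eta_2')$ be the functions obtained from the same formulas with each $e_i$ replaced by $\alpha e_i+\beta$. Then the integrable system $(\eta_1',\eta_2')$ on $M_h$ is topologically equivalent to $(\eta_1,\eta_2)$.
   Context: $\mathbf L=(\ell_{12},\ell_{13},\ell_{14},\ell_{23},\ell_{24},\ell_{34})\in\mathbb R^6\cong\mathfrak{so}(4)^*$ with the Lie–Poisson bracket of $\mathfrak{so}(4)$ (extending $\ell_{ji}=-\ell_{ij}$: $\{\ell_{ij},\ell_{jk}\}=-\ell_{ik}$ for distinct $i,j,k$, and $\{\ell_{ij},\ell_{kl}\}=0$ when $\{i,j\}\cap\{k,l\}=\emptyset$). $M_h=\{\mathbf L:\sum_{i<j}\ell_{ij}^2=2h,\ \ell_{12}\ell_{34}-\ell_{13}\ell_{24}+\ell_{14}\ell_{23}=0\}\cong S^2\times S^2$ is a symplectic leaf. Topological equivalence of integrable systems means there is a homeomorphism of the phase space mapping the Liouville foliation (connected components of fibres of the momentum map) of one system onto that of the other. *)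

theory Defs
  imports "HOL-Analysis.Analysis"
begin

text \<open>Coordinates: a point L of so(4)* = R^6 is a vector in real^6 with
  L$1 = l12, L$2 = l13, L$3 = l14, L$4 = l23, L$5 = l24, L$6 = l34.
  ell L i j gives l_ij for 1 <= i < j <= 4.\<close>

definition ell :: "real^6 \<Rightarrow> nat \<Rightarrow> nat \<Rightarrow> real" where
  "ell L i j =
     (if (i,j) = (1,2) then L$1
      else if (i,j) = (1,3) then L$2
      else if (i,j) = (1,4) then L$3
      else if (i,j) = (2,3) then L$4
      else if (i,j) = (2,4) then L$5
      else if (i,j) = (3,4) then L$6
      else 0)"

definition pairs4 :: "(nat \<times> nat) set" where
  "pairs4 = {(i,j). 1 \<le> i \<and> i < j \<and> j \<le> 4}"

definition Mh :: "real \<Rightarrow> (real^6) set" where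
  "Mh h = {L. (\<Sum>(i,j)\<in>pairs4. (ell L i j)^2) = 2*h \<and>
              ell L 1 2 * ell L 3 4 - ell L 1 3 * ell L 2 4 + ell L 1 4 * ell L 2 3 = 0}"

definition eta1 :: "(nat \<Rightarrow> real) \<Rightarrow> real^6 \<Rightarrow> real" where
  "eta1 e L = (\<Sum>(i,j)\<in>pairs4. (ell L i j)^2 * (\<Sum>k\<in>{1..4} - {i,j}. e k))"

definition eta2 :: "(nat \<Rightarrow> real) \<Rightarrow> real^6 \<Rightarrow> real" where
  "eta2 e L = (\<Sum>(i,j)\<in>pairs4. (ell L i j)^2 * (\<Prod>k\<in>{1..4} - {i,j}. e k))"

definition liouville_leaves :: "'a::topological_space set \<Rightarrow> ('a \<Rightarrow> 'b) \<Rightarrow> 'a set set" where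
  "liouville_leaves S F = {connected_component_set {y \<in> S. F y = F x} x | x. x \<in> S}"

definition top_equivalent :: "'a::topological_space set \<Rightarrow> ('a \<Rightarrow> 'b) \<Rightarrow> ('a \<Rightarrow> 'c) \<Rightarrow> bool" where
  "top_equivalent S F G \<longleftrightarrow>
     (\<exists>\<phi> \<psi>. homeomorphism S S \<phi> \<psi> \<and> (image \<phi>) ` liouville_leaves S F = liouville_leaves S G)"

end

theory Submission
  imports Defs
begin

text \<open>On the leaf the Casimir \<open>\<Sum> \<ell>\<^sub>i\<^sub>j\<^sup>2\<close> equals \<open>2h\<close>, so replacing \<open>e\<^sub>k\<close> by
  \<open>\<alpha> e\<^sub>k + \<beta>\<close> changes \<open>(\<eta>\<^sub>1, \<eta>\<^sub>2)\<close> by the triangular affine map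
  \<open>(a, b) \<mapsto> (\<alpha> a + 4\<beta>h, \<alpha>\<^sup>2 b + \<alpha>\<beta> a + 2\<beta>\<^sup>2h)\<close>, which is injective for \<open>\<alpha> \<noteq> 0\<close>.
  Hence both momentum maps have the same fibres, and the identity of \<open>M\<^sub>h\<close> is the required
  homeomorphism.\<close>

lemma liouville_leaves_eq_image:
  "liouville_leaves S F = (\<lambda>x. connected_component_set {y \<in> S. F y = F x} x) ` S"
  unfolding liouville_leaves_def by blast

lemma liouville_leaves_cong:
  assumes "\<And>x y. x \<in> S \<Longrightarrow> y \<in> S \<Longrightarrow> F y = F x \<longleftrightarrow> G y = G x"
  shows "liouville_leaves S F = liouville_leaves S G"
proof -
  have "{y \<in> S. F y = F x} = {y \<in> S. G y = G x}" if "x \<in> S" for x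
    using assms that by blast
  then show ?thesis
    unfolding liouville_leaves_eq_image by (intro image_cong) simp_all
qed

lemma top_equivalent_if_same_fibres:
  assumes "\<And>x y. x \<in> S \<Longrightarrow> y \<in> S \<Longrightarrow> F y = F x \<longleftrightarrow> G y = G x"
  shows "top_equivalent S F G"
  unfolding top_equivalent_def
  by (intro exI[of _ "\<lambda>x. x"] conjI homeomorphism_ident)
    (simp add: liouville_leaves_cong[OF assms])

lemma top_equivalent_comp_inj_on:
  assumes "inj_on T (G ` S)" and "\<And>x. x \<in> S \<Longrightarrow> F x = T (G x)"
  shows "top_equivalent S F G"
proof (rule top_equivalent_if_same_fibres)
  fix x y assume "x \<in> S" "y \<in> S"
  then show "F y = F x \<longleftrightarrow> G y = G x"
    using assms inj_onD[OF assms(1)] by (metis image_eqI)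
qed

lemma card_complement_pairs4:
  assumes "(i, j) \<in> pairs4"
  shows "card ({1..4} - {i, j}) = 2"
proof -
  have "{i, j} \<subseteq> {1..4}" and "i \<noteq> j"
    using assms by (auto simp: pairs4_def)
  then show ?thesis
    by (simp add: card_Diff_subset)
qed

lemma eta1_affine:
  "eta1 (\<lambda>k. \<alpha> * e k + \<beta>) L = \<alpha> * eta1 e L + 2 * \<beta> * (\<Sum>(i,j)\<in>pairs4. (ell L i j)\<^sup>2)"
proof -
  have summand: "(\<Sum>k\<in>{1..4} - {i, j}. \<alpha> * e k + \<beta>) = \<alpha> * (\<Sum>k\<in>{1..4} - {i, j}. e k) + 2 * \<beta>"
    if "(i, j) \<in> pairs4" for i j
    using card_complement_pairs4[OF that] by (simp add: sum.distrib sum_distrib_left)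
  have "eta1 (\<lambda>k. \<alpha> * e k + \<beta>) L =
      (\<Sum>(i,j)\<in>pairs4. \<alpha> * ((ell L i j)\<^sup>2 * (\<Sum>k\<in>{1..4} - {i, j}. e k)) + 2 * \<beta> * (ell L i j)\<^sup>2)"
    unfolding eta1_def
  proof (rule sum.cong[OF refl], clarify)
    fix i j assume "(i, j) \<in> pairs4"
    then show "(ell L i j)\<^sup>2 * (\<Sum>k\<in>{1..4} - {i, j}. \<alpha> * e k + \<beta>) =
        \<alpha> * ((ell L i j)\<^sup>2 * (\<Sum>k\<in>{1..4} - {i, j}. e k)) + 2 * \<beta> * (ell L i j)\<^sup>2"
      unfolding summand[OF \<open>(i, j) \<in> pairs4\<close>] by algebra
  qed
  also have "\<dots> = \<alpha> * eta1 e L + 2 * \<beta> * (\<Sum>(i,j)\<in>pairs4. (ell L i j)\<^sup>2)"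
    by (simp add: eta1_def case_prod_unfold sum.distrib sum_distrib_left)
  finally show ?thesis .
qed

lemma eta2_affine:
  "eta2 (\<lambda>k. \<alpha> * e k + \<beta>) L =
     \<alpha>\<^sup>2 * eta2 e L + \<alpha> * \<beta> * eta1 e L + \<beta>\<^sup>2 * (\<Sum>(i,j)\<in>pairs4. (ell L i j)\<^sup>2)"
proof -
  have summand: "(\<Prod>k\<in>{1..4} - {i, j}. \<alpha> * e k + \<beta>) =
      \<alpha>\<^sup>2 * (\<Prod>k\<in>{1..4} - {i, j}. e k) + \<alpha> * \<beta> * (\<Sum>k\<in>{1..4} - {i, j}. e k) + \<beta>\<^sup>2"
    if ij: "(i, j) \<in> pairs4" for i j
  proof -
    obtain k l where "{1..4} - {i, j} = {k, l}" and "k \<noteq> l"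
      using card_complement_pairs4[OF ij] by (auto simp: card_2_iff)
    then show ?thesis
      by (simp add: algebra_simps power2_eq_square)
  qed
  have "eta2 (\<lambda>k. \<alpha> * e k + \<beta>) L =
      (\<Sum>(i,j)\<in>pairs4. \<alpha>\<^sup>2 * ((ell L i j)\<^sup>2 * (\<Prod>k\<in>{1..4} - {i, j}. e k))
         + \<alpha> * \<beta> * ((ell L i j)\<^sup>2 * (\<Sum>k\<in>{1..4} - {i, j}. e k)) + \<beta>\<^sup>2 * (ell L i j)\<^sup>2)"
    unfolding eta2_def
  proof (rule sum.cong[OF refl], clarify)
    fix i j assume "(i, j) \<in> pairs4"
    then show "(ell L i j)\<^sup>2 * (\<Prod>k\<in>{1..4} - {i, j}. \<alpha> * e k + \<beta>) =
        \<alpha>\<^sup>2 * ((ell L i j)\<^sup>2 * (\<Prod>k\<in>{1..4} - {i, j}. e k))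
         + \<alpha> * \<beta> * ((ell L i j)\<^sup>2 * (\<Sum>k\<in>{1..4} - {i, j}. e k)) + \<beta>\<^sup>2 * (ell L i j)\<^sup>2"
      unfolding summand[OF \<open>(i, j) \<in> pairs4\<close>] by algebra
  qed
  also have "\<dots> = \<alpha>\<^sup>2 * eta2 e L + \<alpha> * \<beta> * eta1 e L + \<beta>\<^sup>2 * (\<Sum>(i,j)\<in>pairs4. (ell L i j)\<^sup>2)"
    by (simp add: eta1_def eta2_def case_prod_unfold sum.distrib sum_distrib_left)
  finally show ?thesis .
qed

lemma inj_triangular_affine:
  fixes \<alpha> :: real
  assumes "\<alpha> \<noteq> 0"
  shows "inj (\<lambda>(a, b). (\<alpha> * a + c, \<alpha>\<^sup>2 * b + \<gamma> * a + d))"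
proof (rule injI)
  fix p q :: "real \<times> real"
  obtain a b a' b' where p: "p = (a, b)" and q: "q = (a', b')"
    by fastforce
  assume "(\<lambda>(a, b). (\<alpha> * a + c, \<alpha>\<^sup>2 * b + \<gamma> * a + d)) p =
      (\<lambda>(a, b). (\<alpha> * a + c, \<alpha>\<^sup>2 * b + \<gamma> * a + d)) q"
  then have "a = a'" and "\<alpha>\<^sup>2 * b = \<alpha>\<^sup>2 * b'"
    using assms by (auto simp: p q)
  then show "p = q"
    using assms by (simp add: p q)
qed

theorem lemma2:
  fixes e :: "nat \<Rightarrow> real" and h \<alpha> \<beta> :: real
  assumes "e 1 < e 2" "e 2 < e 3" "e 3 < e 4"
    and "h > 0" and "\<alpha> \<noteq> 0"
  shows "top_equivalent (Mh h)
           (\<lambda>L. (eta1 (\<lambda>k. \<alpha> * e k + \<beta>) L, eta2 (\<lambda>k. \<alpha> * e k + \<beta>) L))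
           (\<lambda>L. (eta1 e L, eta2 e L))"
proof (rule top_equivalent_comp_inj_on)
  let ?T = "\<lambda>(a, b). (\<alpha> * a + 4 * \<beta> * h, \<alpha>\<^sup>2 * b + \<alpha> * \<beta> * a + 2 * \<beta>\<^sup>2 * h)"
  show "inj_on ?T ((\<lambda>L. (eta1 e L, eta2 e L)) ` Mh h)"
    using inj_triangular_affine[OF \<open>\<alpha> \<noteq> 0\<close>] by (rule inj_on_subset) simp
  fix L assume "L \<in> Mh h"
  then have "(\<Sum>(i,j)\<in>pairs4. (ell L i j)\<^sup>2) = 2 * h"
    by (simp add: Mh_def)
  then show "(eta1 (\<lambda>k. \<alpha> * e k + \<beta>) L, eta2 (\<lambda>k. \<alpha> * e k + \<beta>) L) = ?T (eta1 e L, eta2 e L)"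
    unfolding eta1_affine eta2_affine by simp
qed

end
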